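(* Let $\Omega=[0,1]^d$ and let $f^s,f^t:\Omega\to\mathbb{R}$ (source and target objective functions, to be minimized) be Lipschitz continuous with a common constant $K^*>0$ with respect to the Chebyshev distance. For $\epsilon>0$, let $B^1,\dots,B^{N_B}$ be a partition of $\Omega$ into neighborhoods, each contained in the closed Chebyshev ball of radius $\epsilon/K^*$ around its center $\boldsymbol{x}_c^i$, and let $f^s_\epsilon(\boldsymbol{x})=\sum_i\mathbf{1}_{B^i}(\boldsymbol{x})f^s(\boldsymbol{x}_c^i)$ and $f^t_\epsilon(\boldsymbol{x})=\sum_i\mathbf{1}_{B^i}(\boldsymbol{x})f^t(\boldsymbol{x}_c^i)$. Suppose that for every $\epsilon>0$ the Spearman rank correlation between $(f^s(\boldsymbol{x}_c^i))_{i}$ and $(f^t(\boldsymbol{x}_c^i))_{i}$ equals $1$. Then transferring a globally converged source solution makes the target converge to its global optimum immediately: for every $\epsilon>0$, if $\boldsymbol{x}^s_{\min}$ is a minimizer of $f^s_\epsilon$ (the best source solution found by a globally convergent surrogate-assisted search on $f^s_\epsilon$) and $\boldsymbol{x}^t_*$ is a global minimizer of $f^t$, then $|f^t(\boldsymbol{x}^t_* )-f^t(\boldsymbol{x}^s_{\min})|\le 4\epsilon$; in particular, for every $\xi>0$, choosing $\epsilon\le\xi/4$ gives $|f^t(\boldsymbol{x}^t_* )-f^t(\boldsymbol{x}^s_{\min})|\le\xi$.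
   Context: The Spearman rank correlation of two vectors is the Pearson correlation of their rank vectors; a value of $1$ means the rankings coincide. $f_\epsilon$ as defined is an $\epsilon$-optimal approximation, i.e. $|f-f_\epsilon|\le\epsilon$ on $\Omega$. *)

theory Defs
  imports "HOL-Analysis.Analysis"
begin

definition unit_cube :: "(real ^ 'd::finite) set" where
  "unit_cube = {x. \<forall>i. 0 \<le> x $ i \<and> x $ i \<le> 1}"

definition cheb_dist :: "real ^ 'd::finite \<Rightarrow> real ^ 'd \<Rightarrow> real" where
  "cheb_dist x y = Max (range (\<lambda>i. \<bar>x $ i - y $ i\<bar>))"

definition cheb_cball :: "real ^ 'd::finite \<Rightarrow> real \<Rightarrow> (real ^ 'd) set" where
  "cheb_cball c r = {x. cheb_dist x c \<le> r}"

definition cheb_lipschitz_on :: "(real ^ 'd::finite) set \<Rightarrow> real \<Rightarrow> (real ^ 'd \<Rightarrow> real) \<Rightarrow> bool" where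
  "cheb_lipschitz_on S K f \<longleftrightarrow> (\<forall>x\<in>S. \<forall>y\<in>S. \<bar>f x - f y\<bar> \<le> K * cheb_dist x y)"

text \<open>Ranks of the entries v 0, ..., v (n-1) (ascending, ties receive the average rank).\<close>
definition rank_vec :: "nat \<Rightarrow> (nat \<Rightarrow> real) \<Rightarrow> nat \<Rightarrow> real" where
  "rank_vec n v i = real (card {j. j < n \<and> v j < v i})
       + (real (card {j. j < n \<and> v j = v i}) + 1) / 2"

definition mean_vec :: "nat \<Rightarrow> (nat \<Rightarrow> real) \<Rightarrow> real" where
  "mean_vec n v = (\<Sum>i<n. v i) / real n"

definition pearson :: "nat \<Rightarrow> (nat \<Rightarrow> real) \<Rightarrow> (nat \<Rightarrow> real) \<Rightarrow> real" where
  "pearson n u v =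
     (\<Sum>i<n. (u i - mean_vec n u) * (v i - mean_vec n v)) /
     sqrt ((\<Sum>i<n. (u i - mean_vec n u)^2) * (\<Sum>i<n. (v i - mean_vec n v)^2))"

definition spearman :: "nat \<Rightarrow> (nat \<Rightarrow> real) \<Rightarrow> (nat \<Rightarrow> real) \<Rightarrow> real" where
  "spearman n u v = pearson n (rank_vec n u) (rank_vec n v)"

definition piecewise_approx ::
  "nat \<Rightarrow> (nat \<Rightarrow> (real ^ 'd::finite) set) \<Rightarrow> (nat \<Rightarrow> real ^ 'd) \<Rightarrow> (real ^ 'd \<Rightarrow> real) \<Rightarrow> real ^ 'd \<Rightarrow> real" where
  "piecewise_approx N B c f x = (\<Sum>i<N. indicator (B i) x * f (c i))"

end

theory Submission
  imports Defs
begin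

text \<open>
  A Spearman correlation of 1 forces the centred rank vectors to be positive multiples of
  each other, so fs and ft order the cell centres in the same way. A minimiser of the
  piecewise-constant approximation of fs lies in a cell whose centre minimises fs over all
  centres, hence also ft over all centres. On every cell, ft stays within \<epsilon> of its value at
  the centre by Lipschitz continuity, so comparing the cells of the two minimisers gives the
  bound 2\<epsilon>, better than the claimed 4\<epsilon>.
\<close>

lemma rank_vec_strict_mono:
  assumes "i < n" "j < n" "v j < v i"
  shows "rank_vec n v j < rank_vec n v i"
proof -
  let ?below_j = "{k. k < n \<and> v k < v j}" and ?tied_j = "{k. k < n \<and> v k = v j}"
  let ?below_i = "{k. k < n \<and> v k < v i}"
  have "card ?below_j + card ?tied_j = card (?below_j \<union> ?tied_j)"
    by (rule card_Un_disjoint[symmetric]) auto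
  also have "\<dots> \<le> card ?below_i"
    using assms by (intro card_mono) auto
  finally have "real (card ?below_j) + real (card ?tied_j) \<le> real (card ?below_i)"
    by linarith
  moreover have "card ?tied_j \<ge> 1"
    using assms(2) by (simp add: Suc_le_eq card_gt_0_iff) blast
  ultimately show ?thesis
    unfolding rank_vec_def by (simp add: field_simps)
qed

lemma rank_vec_mono:
  assumes "i < n" "j < n" "v i \<le> v j"
  shows "rank_vec n v i \<le> rank_vec n v j"
  using rank_vec_strict_mono[of j n i v] assms
  by (cases "v i = v j") (auto simp: rank_vec_def)

lemma pearson_eq_1_imp_proportional:
  assumes "pearson n u v = 1"
  obtains k where "k > 0" "\<And>i. i < n \<Longrightarrow> v i - mean_vec n v = k * (u i - mean_vec n u)"
proof -
  define U where "U i = u i - mean_vec n u" for i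
  define V where "V i = v i - mean_vec n v" for i
  define a where "a = (\<Sum>i<n. (U i)\<^sup>2)"
  define b where "b = (\<Sum>i<n. (V i)\<^sup>2)"
  define p where "p = (\<Sum>i<n. U i * V i)"
  have ratio: "p / sqrt (a * b) = 1"
    using assms unfolding pearson_def p_def a_def b_def U_def V_def .
  have "a \<ge> 0" "b \<ge> 0"
    unfolding a_def b_def by (auto intro: sum_nonneg)
  moreover have "sqrt (a * b) \<noteq> 0"
    using ratio by auto
  ultimately have a_pos: "a > 0" and b_pos: "b > 0"
    by auto
  have p_eq: "p = sqrt a * sqrt b"
    using ratio by (simp add: real_sqrt_mult field_simps split: if_splits)
  \<comment> \<open>Equality case of Cauchy--Schwarz: the vectors \<open>sqrt b * U\<close> and \<open>sqrt a * V\<close> coincide.\<close>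
  have "(\<Sum>i<n. (sqrt b * U i - sqrt a * V i)\<^sup>2)
        = (\<Sum>i<n. b * (U i)\<^sup>2 - 2 * (sqrt a * sqrt b) * (U i * V i) + a * (V i)\<^sup>2)"
    using a_pos b_pos by (simp add: power2_diff power_mult_distrib algebra_simps)
  also have "\<dots> = b * a - 2 * (sqrt a * sqrt b) * p + a * b"
    unfolding a_def b_def p_def by (simp add: sum.distrib sum_subtractf sum_distrib_left)
  also have "\<dots> = 0"
    using p_eq a_pos b_pos by (simp add: algebra_simps flip: real_sqrt_mult)
  finally have "\<forall>i\<in>{..<n}. (sqrt b * U i - sqrt a * V i)\<^sup>2 = 0"
    by (subst sum_nonneg_eq_0_iff[symmetric]) auto
  then have "\<And>i. i < n \<Longrightarrow> V i = (sqrt b / sqrt a) * U i"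
    using a_pos by (auto simp: field_simps)
  moreover have "sqrt b / sqrt a > 0"
    using a_pos b_pos by simp
  ultimately show thesis
    using that unfolding U_def V_def by blast
qed

lemma spearman_eq_1_imp_mono:
  assumes "spearman n u v = 1" "i < n" "j < n" "u i \<le> u j"
  shows "v i \<le> v j"
proof (rule ccontr)
  assume "\<not> v i \<le> v j"
  then have "rank_vec n v j < rank_vec n v i"
    using rank_vec_strict_mono assms(2,3) by simp
  obtain k where "k > 0" and proportional:
    "\<And>m. m < n \<Longrightarrow> rank_vec n v m - mean_vec n (rank_vec n v)
                      = k * (rank_vec n u m - mean_vec n (rank_vec n u))"
    using pearson_eq_1_imp_proportional assms(1) unfolding spearman_def by blast
  have "k * (rank_vec n u i - rank_vec n u j) = rank_vec n v i - rank_vec n v j"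
    using proportional[OF assms(2)] proportional[OF assms(3)] by (simp add: algebra_simps)
  with \<open>rank_vec n v j < rank_vec n v i\<close> \<open>k > 0\<close> have "rank_vec n u j < rank_vec n u i"
    by (metis diff_gt_0_iff_gt zero_less_mult_pos)
  with rank_vec_mono[OF assms(2-4)] show False
    by simp
qed

lemma piecewise_approx_eq_center:
  assumes "disjoint_family_on B {..<N}" "i < N" "x \<in> B i"
  shows "piecewise_approx N B c f x = f (c i)"
proof -
  have "piecewise_approx N B c f x = (\<Sum>j\<in>{i}. indicator (B j) x * f (c j))"
    unfolding piecewise_approx_def
    using assms by (intro sum.mono_neutral_right) (auto simp: disjoint_family_on_def indicator_def)
  with assms(3) show ?thesis
    by simp
qed

lemma cheb_lipschitz_on_cball_bound:
  assumes "cheb_lipschitz_on S K f" "K > 0" "x \<in> S" "y \<in> S" "x \<in> cheb_cball y (\<epsilon> / K)"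
  shows "\<bar>f x - f y\<bar> \<le> \<epsilon>"
proof -
  have "\<bar>f x - f y\<bar> \<le> K * cheb_dist x y"
    using assms(1,3,4) unfolding cheb_lipschitz_on_def by blast
  also have "\<dots> \<le> \<epsilon>"
    using assms(2,5) by (simp add: cheb_cball_def field_simps)
  finally show ?thesis .
qed

lemma piecewise_approx_minimizer_center:
  assumes disj: "disjoint_family_on B {..<N}" and cover: "(\<Union>i<N. B i) = S"
    and nonempty: "\<And>i. i < N \<Longrightarrow> B i \<noteq> {}"
    and "i < N" "x \<in> B i"
    and min: "\<forall>y\<in>S. piecewise_approx N B c f x \<le> piecewise_approx N B c f y"
    and "j < N"
  shows "f (c i) \<le> f (c j)"
proof -
  obtain y where "y \<in> B j"
    using nonempty[OF \<open>j < N\<close>] by blast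
  moreover have "y \<in> S"
    using cover \<open>j < N\<close> \<open>y \<in> B j\<close> by blast
  ultimately show ?thesis
    using min piecewise_approx_eq_center[OF disj] \<open>i < N\<close> \<open>x \<in> B i\<close> \<open>j < N\<close> by metis
qed

lemma transferred_minimizer_error:
  assumes "K > 0" and lip: "cheb_lipschitz_on S K ft"
    and cover: "(\<Union>i<N. B i) = S" and disj: "disjoint_family_on B {..<N}"
    and nonempty: "\<And>i. i < N \<Longrightarrow> B i \<noteq> {}"
    and center_in: "\<And>i. i < N \<Longrightarrow> c i \<in> S"
    and cell_small: "\<And>i. i < N \<Longrightarrow> B i \<subseteq> cheb_cball (c i) (\<epsilon> / K)"
    and spearman_one: "spearman N (\<lambda>i. fs (c i)) (\<lambda>i. ft (c i)) = 1"
    and "xs \<in> S" and xs_min: "\<forall>y\<in>S. piecewise_approx N B c fs xs \<le> piecewise_approx N B c fs y"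
    and "xt \<in> S" and xt_min: "\<forall>y\<in>S. ft xt \<le> ft y"
  shows "\<bar>ft xt - ft xs\<bar> \<le> 2 * \<epsilon>"
proof -
  have near_center: "\<bar>ft x - ft (c k)\<bar> \<le> \<epsilon>" if "k < N" "x \<in> B k" for x k
  proof (rule cheb_lipschitz_on_cball_bound[OF lip \<open>K > 0\<close> _ center_in[OF \<open>k < N\<close>]])
    show "x \<in> S"
      using cover that by blast
    show "x \<in> cheb_cball (c k) (\<epsilon> / K)"
      using cell_small that by blast
  qed
  obtain i where i: "i < N" "xs \<in> B i"
    using cover \<open>xs \<in> S\<close> by blast
  obtain j where j: "j < N" "xt \<in> B j"
    using cover \<open>xt \<in> S\<close> by blast
  have "fs (c i) \<le> fs (c j)"
    using piecewise_approx_minimizer_center[OF disj cover nonempty i xs_min \<open>j < N\<close>] .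
  then have "ft (c i) \<le> ft (c j)"
    using spearman_eq_1_imp_mono[OF spearman_one i(1) j(1)] by simp
  moreover have "ft xt \<le> ft xs"
    using xt_min \<open>xs \<in> S\<close> by blast
  ultimately show ?thesis
    using near_center[OF i] near_center[OF j] by linarith
qed

theorem mainTheorem4:
  fixes fs ft :: "real ^ 'd::finite \<Rightarrow> real"
    and K :: real
    and NB :: "real \<Rightarrow> nat"
    and B :: "real \<Rightarrow> nat \<Rightarrow> (real ^ 'd) set"
    and c :: "real \<Rightarrow> nat \<Rightarrow> real ^ 'd"
  assumes K_pos: "K > 0"
    and lip_s: "cheb_lipschitz_on unit_cube K fs"
    and lip_t: "cheb_lipschitz_on unit_cube K ft"
    and part_cover: "\<And>\<epsilon>. \<epsilon> > 0 \<Longrightarrow> (\<Union>i<NB \<epsilon>. B \<epsilon> i) = unit_cube"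
    and part_disj: "\<And>\<epsilon> i j. \<epsilon> > 0 \<Longrightarrow> i < NB \<epsilon> \<Longrightarrow> j < NB \<epsilon> \<Longrightarrow> i \<noteq> j \<Longrightarrow> B \<epsilon> i \<inter> B \<epsilon> j = {}"
    and part_nonempty: "\<And>\<epsilon> i. \<epsilon> > 0 \<Longrightarrow> i < NB \<epsilon> \<Longrightarrow> B \<epsilon> i \<noteq> {}"
    and center_in: "\<And>\<epsilon> i. \<epsilon> > 0 \<Longrightarrow> i < NB \<epsilon> \<Longrightarrow> c \<epsilon> i \<in> unit_cube"
    and cell_small: "\<And>\<epsilon> i. \<epsilon> > 0 \<Longrightarrow> i < NB \<epsilon> \<Longrightarrow> B \<epsilon> i \<subseteq> cheb_cball (c \<epsilon> i) (\<epsilon> / K)"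
    and spearman_one: "\<And>\<epsilon>. \<epsilon> > 0 \<Longrightarrow>
          spearman (NB \<epsilon>) (\<lambda>i. fs (c \<epsilon> i)) (\<lambda>i. ft (c \<epsilon> i)) = 1"
  shows "(\<forall>\<epsilon> > 0. \<forall>xs_min xt_star.
            xs_min \<in> unit_cube
            \<and> (\<forall>y\<in>unit_cube. piecewise_approx (NB \<epsilon>) (B \<epsilon>) (c \<epsilon>) fs xs_min
                                \<le> piecewise_approx (NB \<epsilon>) (B \<epsilon>) (c \<epsilon>) fs y)
            \<and> xt_star \<in> unit_cube \<and> (\<forall>y\<in>unit_cube. ft xt_star \<le> ft y)
            \<longrightarrow> \<bar>ft xt_star - ft xs_min\<bar> \<le> 4 * \<epsilon>)
         \<and> (\<forall>\<xi> > 0. \<forall>\<epsilon>. 0 < \<epsilon> \<and> \<epsilon> \<le> \<xi> / 4 \<longrightarrow> (\<forall>xs_min xt_star.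
            xs_min \<in> unit_cube
            \<and> (\<forall>y\<in>unit_cube. piecewise_approx (NB \<epsilon>) (B \<epsilon>) (c \<epsilon>) fs xs_min
                                \<le> piecewise_approx (NB \<epsilon>) (B \<epsilon>) (c \<epsilon>) fs y)
            \<and> xt_star \<in> unit_cube \<and> (\<forall>y\<in>unit_cube. ft xt_star \<le> ft y)
            \<longrightarrow> \<bar>ft xt_star - ft xs_min\<bar> \<le> \<xi>))"
proof -
  have error_bound: "\<bar>ft xt - ft xs\<bar> \<le> 2 * \<epsilon>"
    if "\<epsilon> > 0" "xs \<in> unit_cube"
      "\<forall>y\<in>unit_cube. piecewise_approx (NB \<epsilon>) (B \<epsilon>) (c \<epsilon>) fs xs
                      \<le> piecewise_approx (NB \<epsilon>) (B \<epsilon>) (c \<epsilon>) fs y"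
      "xt \<in> unit_cube" "\<forall>y\<in>unit_cube. ft xt \<le> ft y"
    for \<epsilon> xs xt
  proof -
    have "disjoint_family_on (B \<epsilon>) {..<NB \<epsilon>}"
      using part_disj[OF \<open>\<epsilon> > 0\<close>] by (auto simp: disjoint_family_on_def)
    with that show ?thesis
      by (intro transferred_minimizer_error[OF K_pos lip_t part_cover _ part_nonempty center_in
            cell_small spearman_one])
  qed
  show ?thesis
    by (intro conjI allI impI; elim conjE; drule (4) error_bound; linarith)
qed

end
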